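(* Let $(H,B_1,B_2)$ be a Rota-Baxter system of Hopf algebras with descendent Hopf algebra $H_{B_1,B_2}$. Then $B_1$ and $B_2$ (restricted to $H_1$) are Hopf algebra homomorphisms from $H_{B_1,B_2}$ to $H$. Moreover, $\operatorname{Im}(B_1)$ and $\operatorname{Im}(B_2)$ are Hopf subalgebras of $H$.
   Context: $\mathbb{F}$ is a field of characteristic $0$; Sweedler notation $\Delta(a)=a_1\otimes a_2$. A Rota-Baxter system of Hopf algebras is a triple $(H,B_1,B_2)$ where $(H,\cdot,1,\Delta,\epsilon,S)$ is a cocommutative Hopf algebra and $B_1,B_2:H\to H$ are coalgebra homomorphisms with $B_1(1)=B_2(1)=1$ such that for all $a,b\in H$: $B_1(a)B_1(b)=B_1(B_1(a_1)bS(B_2(a_2)))$ and $B_2(a)B_2(b)=B_2(B_1(a_1)bS(B_2(a_2)))$. Descendent operation $a\circ b=B_1(a_1)bS(B_2(a_2))$, cocycle $\sigma(a)=B_1(a_1)S(B_2(a_2))$, $H_1=\operatorname{Im}(\sigma)$. The descendent Hopf algebra $H_{B_1,B_2}$ is $H_1$ with product $\circ$, unit $1$, coproduct and counit the restrictions of $\Delta,\epsilon$, and antipode $T(a)=S(B_1(a_1))B_2(a_2)$. *)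

theory Defs
  imports Complex_Main
begin

(* Tensors in H (x) H are represented by finite lists of pairs [(x_i,y_i)] standing for
   sum_i x_i (x) y_i.  Two such representatives denote the same tensor iff every
   bilinear form H x H -> k takes the same value on them (H(x)H embeds into its double
   dual), similarly for H(x)H(x)H with trilinear forms.  The coproduct is a map
   Delta :: 'h => ('h * 'h) list choosing a representative of Delta(a). *)

definition sw :: "('h \<Rightarrow> 'h \<Rightarrow> 'c::comm_monoid_add) \<Rightarrow> ('h \<times> 'h) list \<Rightarrow> 'c" where
  "sw f t = (\<Sum>(x, y)\<leftarrow>t. f x y)"

definition bilin :: "('k::field \<Rightarrow> 'h::ab_group_add \<Rightarrow> 'h) \<Rightarrow> ('h \<Rightarrow> 'h \<Rightarrow> 'k) \<Rightarrow> bool" where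
  "bilin sc \<beta> \<longleftrightarrow> (\<forall>y. Vector_Spaces.linear sc (*) (\<lambda>x. \<beta> x y)) \<and> (\<forall>x. Vector_Spaces.linear sc (*) (\<beta> x))"

definition trilin :: "('k::field \<Rightarrow> 'h::ab_group_add \<Rightarrow> 'h) \<Rightarrow> ('h \<Rightarrow> 'h \<Rightarrow> 'h \<Rightarrow> 'k) \<Rightarrow> bool" where
  "trilin sc \<tau> \<longleftrightarrow> (\<forall>y z. Vector_Spaces.linear sc (*) (\<lambda>x. \<tau> x y z))
     \<and> (\<forall>x z. Vector_Spaces.linear sc (*) (\<lambda>y. \<tau> x y z))
     \<and> (\<forall>x y. Vector_Spaces.linear sc (*) (\<lambda>z. \<tau> x y z))"

definition tensor_eq :: "('k::field \<Rightarrow> 'h::ab_group_add \<Rightarrow> 'h) \<Rightarrow> ('h \<times> 'h) list \<Rightarrow> ('h \<times> 'h) list \<Rightarrow> bool" where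
  "tensor_eq sc t u \<longleftrightarrow> (\<forall>\<beta>. bilin sc \<beta> \<longrightarrow> sw \<beta> t = sw \<beta> u)"

definition cocomm_hopf_algebra ::
  "('k::field \<Rightarrow> 'h::ring_1 \<Rightarrow> 'h) \<Rightarrow> ('h \<Rightarrow> ('h \<times> 'h) list) \<Rightarrow> ('h \<Rightarrow> 'k) \<Rightarrow> ('h \<Rightarrow> 'h) \<Rightarrow> bool" where
  "cocomm_hopf_algebra sc \<Delta> \<epsilon> S \<longleftrightarrow>
     \<comment> \<open>algebra\<close>
     vector_space sc \<and>
     (\<forall>c a b. sc c (a * b) = sc c a * b \<and> sc c (a * b) = a * sc c b) \<and>
     \<comment> \<open>coproduct: linear, coassociative, multiplicative, unital\<close>
     (\<forall>c a b. tensor_eq sc (\<Delta> (sc c a + b))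
        (map (\<lambda>(x, y). (sc c x, y)) (\<Delta> a) @ \<Delta> b)) \<and>
     (\<forall>a \<tau>. trilin sc \<tau> \<longrightarrow>
        sw (\<lambda>x y. sw (\<lambda>x' y'. \<tau> x' y' y) (\<Delta> x)) (\<Delta> a)
      = sw (\<lambda>x y. sw (\<lambda>x' y'. \<tau> x x' y') (\<Delta> y)) (\<Delta> a)) \<and>
     (\<forall>a b. tensor_eq sc (\<Delta> (a * b))
        (concat (map (\<lambda>(x, y). map (\<lambda>(x', y'). (x * x', y * y')) (\<Delta> b)) (\<Delta> a)))) \<and>
     tensor_eq sc (\<Delta> 1) [(1, 1)] \<and>
     \<comment> \<open>counit: linear, counit axioms, multiplicative, unital\<close>
     Vector_Spaces.linear sc (*) \<epsilon> \<and>
     (\<forall>a. sw (\<lambda>x y. sc (\<epsilon> x) y) (\<Delta> a) = a \<and> sw (\<lambda>x y. sc (\<epsilon> y) x) (\<Delta> a) = a) \<and>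
     (\<forall>a b. \<epsilon> (a * b) = \<epsilon> a * \<epsilon> b) \<and> \<epsilon> 1 = 1 \<and>
     \<comment> \<open>antipode\<close>
     Vector_Spaces.linear sc sc S \<and>
     (\<forall>a. sw (\<lambda>x y. S x * y) (\<Delta> a) = sc (\<epsilon> a) 1 \<and> sw (\<lambda>x y. x * S y) (\<Delta> a) = sc (\<epsilon> a) 1) \<and>
     \<comment> \<open>cocommutativity\<close>
     (\<forall>a. tensor_eq sc (\<Delta> a) (map (\<lambda>(x, y). (y, x)) (\<Delta> a)))"

definition coalg_hom :: "('k::field \<Rightarrow> 'h::ring_1 \<Rightarrow> 'h) \<Rightarrow> ('h \<Rightarrow> ('h \<times> 'h) list) \<Rightarrow> ('h \<Rightarrow> 'k) \<Rightarrow> ('h \<Rightarrow> 'h) \<Rightarrow> bool" where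
  "coalg_hom sc \<Delta> \<epsilon> B \<longleftrightarrow> Vector_Spaces.linear sc sc B \<and>
     (\<forall>a. tensor_eq sc (\<Delta> (B a)) (map (\<lambda>(x, y). (B x, B y)) (\<Delta> a))) \<and>
     (\<forall>a. \<epsilon> (B a) = \<epsilon> a)"

definition rota_baxter_system ::
  "('k::field \<Rightarrow> 'h::ring_1 \<Rightarrow> 'h) \<Rightarrow> ('h \<Rightarrow> ('h \<times> 'h) list) \<Rightarrow> ('h \<Rightarrow> 'k) \<Rightarrow> ('h \<Rightarrow> 'h) \<Rightarrow> ('h \<Rightarrow> 'h) \<Rightarrow> ('h \<Rightarrow> 'h) \<Rightarrow> bool" where
  "rota_baxter_system sc \<Delta> \<epsilon> S B1 B2 \<longleftrightarrow> cocomm_hopf_algebra sc \<Delta> \<epsilon> S \<and>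
     coalg_hom sc \<Delta> \<epsilon> B1 \<and> coalg_hom sc \<Delta> \<epsilon> B2 \<and> B1 1 = 1 \<and> B2 1 = 1 \<and>
     (\<forall>a b. B1 a * B1 b = B1 (sw (\<lambda>x y. B1 x * b * S (B2 y)) (\<Delta> a))) \<and>
     (\<forall>a b. B2 a * B2 b = B2 (sw (\<lambda>x y. B1 x * b * S (B2 y)) (\<Delta> a)))"

text \<open>Descendent operation, cocycle, and H_1 = Im(sigma).\<close>
definition desc_op :: "('h::ring_1 \<Rightarrow> ('h \<times> 'h) list) \<Rightarrow> ('h \<Rightarrow> 'h) \<Rightarrow> ('h \<Rightarrow> 'h) \<Rightarrow> ('h \<Rightarrow> 'h) \<Rightarrow> 'h \<Rightarrow> 'h \<Rightarrow> 'h" where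
  "desc_op \<Delta> S B1 B2 a b = sw (\<lambda>x y. B1 x * b * S (B2 y)) (\<Delta> a)"

definition cocycle :: "('h::ring_1 \<Rightarrow> ('h \<times> 'h) list) \<Rightarrow> ('h \<Rightarrow> 'h) \<Rightarrow> ('h \<Rightarrow> 'h) \<Rightarrow> ('h \<Rightarrow> 'h) \<Rightarrow> 'h \<Rightarrow> 'h" where
  "cocycle \<Delta> S B1 B2 a = sw (\<lambda>x y. B1 x * S (B2 y)) (\<Delta> a)"

definition desc_carrier :: "('h::ring_1 \<Rightarrow> ('h \<times> 'h) list) \<Rightarrow> ('h \<Rightarrow> 'h) \<Rightarrow> ('h \<Rightarrow> 'h) \<Rightarrow> ('h \<Rightarrow> 'h) \<Rightarrow> 'h set" where
  "desc_carrier \<Delta> S B1 B2 = range (cocycle \<Delta> S B1 B2)"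

text \<open>Hopf algebra homomorphism f from (A, mA, uA, DeltaA, epsA) to (H, *, 1, Delta, eps),
  i.e. a linear map on A which is an algebra and a coalgebra homomorphism (bialgebra map;
  compatibility with the antipodes is then automatic).  The structure maps of the source
  are given as maps on the ambient space, and the carrier A is a subspace.\<close>
definition hopf_hom_on ::
  "('k::field \<Rightarrow> 'h::ring_1 \<Rightarrow> 'h) \<Rightarrow> 'h set \<Rightarrow> ('h \<Rightarrow> 'h \<Rightarrow> 'h) \<Rightarrow> 'h \<Rightarrow> ('h \<Rightarrow> ('h \<times> 'h) list) \<Rightarrow> ('h \<Rightarrow> 'k)
    \<Rightarrow> ('h \<Rightarrow> ('h \<times> 'h) list) \<Rightarrow> ('h \<Rightarrow> 'k) \<Rightarrow> ('h \<Rightarrow> 'h) \<Rightarrow> bool" where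
  "hopf_hom_on sc A mA uA \<Delta>A \<epsilon>A \<Delta> \<epsilon> f \<longleftrightarrow>
     (\<forall>c. \<forall>a\<in>A. \<forall>b\<in>A. f (sc c a + b) = sc c (f a) + f b) \<and>
     (\<forall>a\<in>A. \<forall>b\<in>A. f (mA a b) = f a * f b) \<and>
     f uA = 1 \<and>
     (\<forall>a\<in>A. tensor_eq sc (\<Delta> (f a)) (map (\<lambda>(x, y). (f x, f y)) (\<Delta>A a))) \<and>
     (\<forall>a\<in>A. \<epsilon> (f a) = \<epsilon>A a)"

definition hopf_subalgebra ::
  "('k::field \<Rightarrow> 'h::ring_1 \<Rightarrow> 'h) \<Rightarrow> ('h \<Rightarrow> ('h \<times> 'h) list) \<Rightarrow> ('h \<Rightarrow> 'h) \<Rightarrow> 'h set \<Rightarrow> bool" where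
  "hopf_subalgebra sc \<Delta> S C \<longleftrightarrow> module.subspace sc C \<and> 1 \<in> C \<and>
     (\<forall>a\<in>C. \<forall>b\<in>C. a * b \<in> C) \<and>
     (\<forall>a\<in>C. \<exists>t. set t \<subseteq> C \<times> C \<and> tensor_eq sc (\<Delta> a) t) \<and>
     (\<forall>a\<in>C. S a \<in> C)"

end

theory Submission
  imports Defs
begin

(* For B = B1 or B2, multiplicativity of B with respect to the descendent product is the
   Rota-Baxter identity itself, and compatibility with coproduct and counit holds because B is a
   coalgebra map.  The substance is closure of Im(B) under the antipode.  Write * for the
   convolution product of linear endomorphisms.  Since B is a coalgebra map, S o B is a
   convolution inverse of B.  On the other hand the Rota-Baxter identity, together with
   coassociativity and cocommutativity, gives B * (B o c) = B o (B1 * c * (S o B2)) for every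
   linear c; for c = (S o B1) * B2 the right-hand side collapses to the convolution unit.  Hence
   S o B = B o ((S o B1) * B2), so S(B a) lies in Im(B). *)

lemma sw_Nil [simp]: "sw f [] = 0"
  by (simp add: sw_def)

lemma sw_Cons [simp]: "sw f ((x, y) # t) = f x y + sw f t"
  by (simp add: sw_def)

lemma sw_append [simp]: "sw f (t @ u) = sw f t + sw f u"
  by (simp add: sw_def)

lemma sw_cong: "(\<And>x y. (x, y) \<in> set t \<Longrightarrow> f x y = g x y) \<Longrightarrow> sw f t = sw g t"
  by (induction t) auto

lemma sw_map_swap: "sw f (map (\<lambda>(x, y). (y, x)) t) = sw (\<lambda>x y. f y x) t"
  by (induction t) auto

lemma sw_map_pair: "sw f (map (\<lambda>(x, y). (g x, h y)) t) = sw (\<lambda>x y. f (g x) (h y)) t"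
  by (induction t) auto

lemma linear_sw:
  assumes "Vector_Spaces.linear s1 s2 L"
  shows "L (sw f t) = sw (\<lambda>x y. L (f x y)) t"
proof -
  interpret Vector_Spaces.linear s1 s2 L by fact
  show ?thesis by (induction t) (auto simp: add)
qed

lemma vector_space_field_mult: "vector_space ((*) :: 'k::field \<Rightarrow> 'k \<Rightarrow> 'k)"
  by unfold_locales (auto simp: algebra_simps)

lemma (in vector_space) eq_if_functionals_eq:
  assumes "\<And>\<phi>. Vector_Spaces.linear scale (*) \<phi> \<Longrightarrow> \<phi> u = \<phi> v"
  shows "u = v"
proof (rule ccontr)
  assume "u \<noteq> v"
  interpret vector_space_pair scale "(*) :: 'a \<Rightarrow> 'a \<Rightarrow> 'a"
    using vector_space_axioms vector_space_field_mult by (simp add: vector_space_pair_def)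
  have "independent {u - v}"
    using \<open>u \<noteq> v\<close> by (intro independent_insertI) (auto simp: independent_empty)
  then obtain \<phi> where \<phi>: "Vector_Spaces.linear scale (*) \<phi>" "\<phi> (u - v) = 1"
    using linear_independent_extend[of "{u - v}" "\<lambda>_. 1"] by auto
  with assms[OF \<phi>(1)] show False
    by (simp add: linear_diff)
qed

locale cocomm_hopf =
  fixes sc :: "'k::field \<Rightarrow> 'h::ring_1 \<Rightarrow> 'h"
    and \<Delta> :: "'h \<Rightarrow> ('h \<times> 'h) list" and \<epsilon> :: "'h \<Rightarrow> 'k" and S :: "'h \<Rightarrow> 'h"
  assumes cocomm_hopf: "cocomm_hopf_algebra sc \<Delta> \<epsilon> S"
begin

sublocale V: vector_space sc
  using cocomm_hopf by (simp add: cocomm_hopf_algebra_def)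

lemma scale_mult_left: "sc c (a * b) = sc c a * b"
  using cocomm_hopf unfolding cocomm_hopf_algebra_def by blast

lemma scale_mult_right: "sc c (a * b) = a * sc c b"
  using cocomm_hopf unfolding cocomm_hopf_algebra_def by blast

lemma coproduct_linear:
  "tensor_eq sc (\<Delta> (sc c a + b)) (map (\<lambda>(x, y). (sc c x, y)) (\<Delta> a) @ \<Delta> b)"
  using cocomm_hopf unfolding cocomm_hopf_algebra_def by blast

lemma coassoc: "trilin sc \<tau> \<Longrightarrow> sw (\<lambda>x y. sw (\<lambda>x' y'. \<tau> x' y' y) (\<Delta> x)) (\<Delta> a)
    = sw (\<lambda>x y. sw (\<lambda>x' y'. \<tau> x x' y') (\<Delta> y)) (\<Delta> a)"
  using cocomm_hopf unfolding cocomm_hopf_algebra_def by blast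

lemma cocomm: "tensor_eq sc (\<Delta> a) (map (\<lambda>(x, y). (y, x)) (\<Delta> a))"
  using cocomm_hopf unfolding cocomm_hopf_algebra_def by blast

lemma counit_left: "sw (\<lambda>x y. sc (\<epsilon> x) y) (\<Delta> a) = a"
  using cocomm_hopf unfolding cocomm_hopf_algebra_def by blast

lemma counit_right: "sw (\<lambda>x y. sc (\<epsilon> y) x) (\<Delta> a) = a"
  using cocomm_hopf unfolding cocomm_hopf_algebra_def by blast

lemma antipode_left: "sw (\<lambda>x y. S x * y) (\<Delta> a) = sc (\<epsilon> a) 1"
  using cocomm_hopf unfolding cocomm_hopf_algebra_def by blast

lemma antipode_right: "sw (\<lambda>x y. x * S y) (\<Delta> a) = sc (\<epsilon> a) 1"
  using cocomm_hopf unfolding cocomm_hopf_algebra_def by blast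

abbreviation lin :: "('h \<Rightarrow> 'h) \<Rightarrow> bool" where
  "lin f \<equiv> Vector_Spaces.linear sc sc f"

lemma antipode_lin: "lin S"
  using cocomm_hopf unfolding cocomm_hopf_algebra_def by blast

lemma linI: "(\<And>x y. f (x + y) = f x + f y) \<Longrightarrow> (\<And>c x. f (sc c x) = sc c (f x)) \<Longrightarrow> lin f"
  by (simp add: Vector_Spaces.linear_iff V.vector_space_axioms)

lemma lin_add: "lin f \<Longrightarrow> f (x + y) = f x + f y"
  by (simp add: Vector_Spaces.linear_iff)

lemma lin_scale: "lin f \<Longrightarrow> f (sc c x) = sc c (f x)"
  by (simp add: Vector_Spaces.linear_iff)

lemma lin_comp: "lin f \<Longrightarrow> lin g \<Longrightarrow> lin (g \<circ> f)"
  by (rule Vector_Spaces.linear_compose)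

lemma lin_mult_const_right: "lin (\<lambda>x. x * v)"
  by (rule linI) (auto simp: distrib_right scale_mult_left)

lemma lin_mult_const_left: "lin (\<lambda>x. v * x)"
  by (rule linI) (auto simp: distrib_left scale_mult_right)

lemma coalg_hom_lin: "coalg_hom sc \<Delta> \<epsilon> B \<Longrightarrow> lin B"
  by (simp add: coalg_hom_def)

definition bilinear_op :: "('h \<Rightarrow> 'h \<Rightarrow> 'h) \<Rightarrow> bool" where
  "bilinear_op f \<longleftrightarrow> (\<forall>y. lin (\<lambda>x. f x y)) \<and> (\<forall>x. lin (f x))"

definition trilinear_op :: "('h \<Rightarrow> 'h \<Rightarrow> 'h \<Rightarrow> 'h) \<Rightarrow> bool" where
  "trilinear_op f \<longleftrightarrow> (\<forall>y z. lin (\<lambda>x. f x y z)) \<and> (\<forall>x z. lin (\<lambda>y. f x y z))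
     \<and> (\<forall>x y. lin (\<lambda>z. f x y z))"

lemma lin_mult_both: "lin f \<Longrightarrow> lin (\<lambda>x. u * f x * v)"
  using lin_comp[OF lin_comp[OF _ lin_mult_const_right] lin_mult_const_left]
  by (simp add: comp_def mult.assoc)

lemma bilinear_op_mult:
  assumes "lin f" "lin g"
  shows "bilinear_op (\<lambda>x y. f x * g y)"
  unfolding bilinear_op_def
proof (intro conjI allI)
  fix x y
  show "lin (\<lambda>x. f x * g y)" using lin_mult_both[OF assms(1), of 1] by simp
  show "lin (\<lambda>y. f x * g y)" using lin_mult_both[OF assms(2), of _ 1] by simp
qed

lemma trilinear_op_mult:
  assumes "lin f" "lin g" "lin h"
  shows "trilinear_op (\<lambda>x y z. f x * g y * h z)"
  unfolding trilinear_op_def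
proof (intro conjI allI)
  fix x y z
  show "lin (\<lambda>x. f x * g y * h z)" using lin_mult_both[OF assms(1), of 1] by (simp add: mult.assoc)
  show "lin (\<lambda>y. f x * g y * h z)" using lin_mult_both[OF assms(2)] .
  show "lin (\<lambda>z. f x * g y * h z)" using lin_mult_both[OF assms(3), of _ 1] by simp
qed

lemma lin_comp_functional:
  "Vector_Spaces.linear sc (*) \<phi> \<Longrightarrow> lin f \<Longrightarrow> Vector_Spaces.linear sc (*) (\<lambda>x. \<phi> (f x))"
  using Vector_Spaces.linear_compose[of sc sc f "(*)" \<phi>] by (simp add: comp_def)

lemma tensor_eq_sw:
  assumes "tensor_eq sc t u" "bilinear_op f"
  shows "sw f t = sw f u"
proof (rule V.eq_if_functionals_eq)
  fix \<phi> assume \<phi>: "Vector_Spaces.linear sc (*) \<phi>"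
  have "bilin sc (\<lambda>x y. \<phi> (f x y))"
    using assms(2) unfolding bilin_def bilinear_op_def by (simp add: lin_comp_functional[OF \<phi>])
  with assms(1) show "\<phi> (sw f t) = \<phi> (sw f u)"
    unfolding tensor_eq_def linear_sw[OF \<phi>] by blast
qed

lemma coassoc_sw:
  assumes "trilinear_op f"
  shows "sw (\<lambda>x y. sw (\<lambda>x' y'. f x' y' y) (\<Delta> x)) (\<Delta> a)
       = sw (\<lambda>x y. sw (\<lambda>x' y'. f x x' y') (\<Delta> y)) (\<Delta> a)"
proof (rule V.eq_if_functionals_eq)
  fix \<phi> assume \<phi>: "Vector_Spaces.linear sc (*) \<phi>"
  have "trilin sc (\<lambda>x y z. \<phi> (f x y z))"
    using assms unfolding trilin_def trilinear_op_def by (simp add: lin_comp_functional[OF \<phi>])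
  from coassoc[OF this] show "\<phi> (sw (\<lambda>x y. sw (\<lambda>x' y'. f x' y' y) (\<Delta> x)) (\<Delta> a)) =
      \<phi> (sw (\<lambda>x y. sw (\<lambda>x' y'. f x x' y') (\<Delta> y)) (\<Delta> a))"
    unfolding linear_sw[OF \<phi>] .
qed

lemma cocomm_sw: "bilinear_op f \<Longrightarrow> sw f (\<Delta> a) = sw (\<lambda>x y. f y x) (\<Delta> a)"
  using tensor_eq_sw[OF cocomm] sw_map_swap by metis

lemma coassoc_cocomm_sw:
  assumes "trilinear_op f"
  shows "sw (\<lambda>x y. sw (\<lambda>x' y'. f x' y y') (\<Delta> x)) (\<Delta> a)
       = sw (\<lambda>x y. sw (\<lambda>x' y'. f x x' y') (\<Delta> y)) (\<Delta> a)"
proof -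
  have "trilinear_op (\<lambda>x y z. f x z y)"
    using assms unfolding trilinear_op_def by blast
  from coassoc_sw[OF this]
  have "sw (\<lambda>x y. sw (\<lambda>x' y'. f x' y y') (\<Delta> x)) (\<Delta> a)
      = sw (\<lambda>x y. sw (\<lambda>x' y'. f x y' x') (\<Delta> y)) (\<Delta> a)" .
  also have "\<dots> = sw (\<lambda>x y. sw (\<lambda>x' y'. f x x' y') (\<Delta> y)) (\<Delta> a)"
  proof (rule sw_cong)
    fix x y
    have "bilinear_op (\<lambda>y' x'. f x x' y')"
      using assms unfolding trilinear_op_def bilinear_op_def by blast
    from cocomm_sw[OF this] show "sw (\<lambda>x' y'. f x y' x') (\<Delta> y) = sw (\<lambda>x' y'. f x x' y') (\<Delta> y)" .
  qed
  finally show ?thesis .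
qed

lemma sw_map_scale_fst:
  assumes "\<And>x y. f (sc c x) y = sc c (f x y)"
  shows "sw f (map (\<lambda>(x, y). (sc c x, y)) t) = sc c (sw f t)"
  by (induction t) (auto simp: assms V.scale_right_distrib)

lemma lin_sw_coproduct:
  assumes "bilinear_op f"
  shows "lin (\<lambda>a. sw f (\<Delta> a))"
proof -
  have "f (sc c x) y = sc c (f x y)" for c x y
    using assms lin_scale unfolding bilinear_op_def by blast
  then have linear_comb: "sw f (\<Delta> (sc c a + b)) = sc c (sw f (\<Delta> a)) + sw f (\<Delta> b)" for c a b
    using tensor_eq_sw[OF coproduct_linear assms] sw_map_scale_fst by simp
  then have "sw f (\<Delta> 0) = 0"
    using linear_comb[of 1 0 0] by simp
  then show ?thesis
    using linear_comb[of 1] linear_comb[of _ _ 0] by (intro linI) simp_all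
qed

lemma sw_coproduct_coalg_hom:
  assumes "coalg_hom sc \<Delta> \<epsilon> B" "bilinear_op f"
  shows "sw f (\<Delta> (B a)) = sw (\<lambda>x y. f (B x) (B y)) (\<Delta> a)"
  using tensor_eq_sw[OF _ assms(2)] assms(1) sw_map_pair unfolding coalg_hom_def by metis

definition conv :: "('h \<Rightarrow> 'h) \<Rightarrow> ('h \<Rightarrow> 'h) \<Rightarrow> 'h \<Rightarrow> 'h" (infixl \<open>\<star>\<close> 70) where
  "(f \<star> g) a = sw (\<lambda>x y. f x * g y) (\<Delta> a)"

definition conv_unit :: "'h \<Rightarrow> 'h" where
  "conv_unit a = sc (\<epsilon> a) 1"

lemma lin_conv: "lin f \<Longrightarrow> lin g \<Longrightarrow> lin (f \<star> g)"
  unfolding conv_def[abs_def] by (rule lin_sw_coproduct[OF bilinear_op_mult])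

lemma conv_assoc:
  assumes "lin f" "lin g" "lin h"
  shows "(f \<star> g) \<star> h = f \<star> (g \<star> h)"
proof
  fix a
  have "((f \<star> g) \<star> h) a = sw (\<lambda>x y. sw (\<lambda>x' y'. f x' * g y' * h y) (\<Delta> x)) (\<Delta> a)"
    unfolding conv_def linear_sw[OF lin_mult_const_right] ..
  also have "\<dots> = sw (\<lambda>x y. sw (\<lambda>x' y'. f x * g x' * h y') (\<Delta> y)) (\<Delta> a)"
    by (rule coassoc_sw[OF trilinear_op_mult[OF assms]])
  also have "\<dots> = (f \<star> (g \<star> h)) a"
    unfolding conv_def linear_sw[OF lin_mult_const_left] by (simp add: mult.assoc)
  finally show "((f \<star> g) \<star> h) a = (f \<star> (g \<star> h)) a" .
qed

lemma conv_unit_right: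
  assumes "lin f"
  shows "f \<star> conv_unit = f"
proof
  fix a
  have "(f \<star> conv_unit) a = sw (\<lambda>x y. f (sc (\<epsilon> y) x)) (\<Delta> a)"
    by (simp add: conv_def conv_unit_def lin_scale[OF assms] scale_mult_right[symmetric])
  also have "\<dots> = f a"
    unfolding linear_sw[OF assms, symmetric] counit_right ..
  finally show "(f \<star> conv_unit) a = f a" .
qed

lemma conv_unit_left:
  assumes "lin f"
  shows "conv_unit \<star> f = f"
proof
  fix a
  have "(conv_unit \<star> f) a = sw (\<lambda>x y. f (sc (\<epsilon> x) y)) (\<Delta> a)"
    by (simp add: conv_def conv_unit_def lin_scale[OF assms] scale_mult_left[symmetric])
  also have "\<dots> = f a"
    unfolding linear_sw[OF assms, symmetric] counit_left ..
  finally show "(conv_unit \<star> f) a = f a" .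
qed

lemma comp_conv_unit: "lin B \<Longrightarrow> B 1 = 1 \<Longrightarrow> B \<circ> conv_unit = conv_unit"
  by (rule ext) (simp add: conv_unit_def lin_scale)

lemma conv_inverse_unique:
  assumes "lin f" "lin g" "lin h" and "f \<star> g = conv_unit" and "h \<star> f = conv_unit"
  shows "h = g"
proof -
  have "h = h \<star> (f \<star> g)"
    using assms(3,4) by (simp add: conv_unit_right)
  also have "\<dots> = (h \<star> f) \<star> g"
    using assms(1-3) by (simp add: conv_assoc)
  also have "\<dots> = g"
    using assms(2,5) by (simp add: conv_unit_left)
  finally show ?thesis .
qed

lemma coalg_hom_conv_antipode_right:
  assumes "coalg_hom sc \<Delta> \<epsilon> B"
  shows "B \<star> (S \<circ> B) = conv_unit"
proof
  fix a
  have "(B \<star> (S \<circ> B)) a = sw (\<lambda>x y. x * S y) (\<Delta> (B a))"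
    using sw_coproduct_coalg_hom[OF assms bilinear_op_mult[OF V.linear_id antipode_lin]]
    by (simp add: conv_def)
  also have "\<dots> = conv_unit a"
    using assms by (simp add: antipode_right conv_unit_def coalg_hom_def)
  finally show "(B \<star> (S \<circ> B)) a = conv_unit a" .
qed

lemma coalg_hom_conv_antipode_left:
  assumes "coalg_hom sc \<Delta> \<epsilon> B"
  shows "(S \<circ> B) \<star> B = conv_unit"
proof
  fix a
  have "((S \<circ> B) \<star> B) a = sw (\<lambda>x y. S x * y) (\<Delta> (B a))"
    using sw_coproduct_coalg_hom[OF assms bilinear_op_mult[OF antipode_lin V.linear_id]]
    by (simp add: conv_def)
  also have "\<dots> = conv_unit a"
    using assms by (simp add: antipode_left conv_unit_def coalg_hom_def)
  finally show "((S \<circ> B) \<star> B) a = conv_unit a" .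
qed

end

locale rota_baxter_system_component = cocomm_hopf sc \<Delta> \<epsilon> S
  for sc :: "'k::field \<Rightarrow> 'h::ring_1 \<Rightarrow> 'h" and \<Delta> \<epsilon> S +
  fixes B1 B2 B :: "'h \<Rightarrow> 'h"
  assumes coalg_hom_B1: "coalg_hom sc \<Delta> \<epsilon> B1"
    and coalg_hom_B2: "coalg_hom sc \<Delta> \<epsilon> B2"
    and coalg_hom_B: "coalg_hom sc \<Delta> \<epsilon> B"
    and B_one: "B 1 = 1"
    and B_mult: "B a * B b = B (desc_op \<Delta> S B1 B2 a b)"
begin

lemma lin_B1: "lin B1" and lin_B2: "lin B2" and lin_B: "lin B"
  using coalg_hom_B1 coalg_hom_B2 coalg_hom_B by (simp_all add: coalg_hom_lin)

lemma conv_comp_B: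
  assumes c: "lin c"
  shows "B \<star> (B \<circ> c) = B \<circ> (B1 \<star> (c \<star> (S \<circ> B2)))"
proof
  fix a
  have "(B \<star> (B \<circ> c)) a = sw (\<lambda>x y. B (sw (\<lambda>x' y'. B1 x' * c y * S (B2 y')) (\<Delta> x))) (\<Delta> a)"
    by (simp add: conv_def B_mult desc_op_def)
  also have "\<dots> = B (sw (\<lambda>x y. sw (\<lambda>x' y'. B1 x' * c y * (S \<circ> B2) y') (\<Delta> x)) (\<Delta> a))"
    by (simp add: linear_sw[OF lin_B])
  also have "\<dots> = B (sw (\<lambda>x y. sw (\<lambda>x' y'. B1 x * c x' * (S \<circ> B2) y') (\<Delta> y)) (\<Delta> a))"
    by (simp only: coassoc_cocomm_sw[OF trilinear_op_mult[OF lin_B1 c lin_comp[OF lin_B2 antipode_lin]]])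
  also have "\<dots> = (B \<circ> (B1 \<star> (c \<star> (S \<circ> B2)))) a"
    by (simp add: conv_def linear_sw[OF lin_mult_const_left] mult.assoc)
  finally show "(B \<star> (B \<circ> c)) a = (B \<circ> (B1 \<star> (c \<star> (S \<circ> B2)))) a" .
qed

lemma antipode_comp_B: "S \<circ> B = B \<circ> ((S \<circ> B1) \<star> B2)"
proof -
  define c where "c = (S \<circ> B1) \<star> B2"
  have lSB1: "lin (S \<circ> B1)" and lSB2: "lin (S \<circ> B2)" and lSB: "lin (S \<circ> B)"
    using lin_B1 lin_B2 lin_B by (simp_all add: lin_comp antipode_lin)
  have lc: "lin c"
    unfolding c_def by (rule lin_conv[OF lSB1 lin_B2])
  have "c \<star> (S \<circ> B2) = (S \<circ> B1) \<star> (B2 \<star> (S \<circ> B2))"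
    unfolding c_def by (rule conv_assoc[OF lSB1 lin_B2 lSB2])
  also have "\<dots> = S \<circ> B1"
    by (simp add: coalg_hom_conv_antipode_right[OF coalg_hom_B2] conv_unit_right[OF lSB1])
  finally have "B \<star> (B \<circ> c) = B \<circ> (B1 \<star> (S \<circ> B1))"
    by (simp add: conv_comp_B[OF lc])
  also have "\<dots> = conv_unit"
    by (simp add: coalg_hom_conv_antipode_right[OF coalg_hom_B1] comp_conv_unit[OF lin_B B_one])
  finally have "B \<star> (B \<circ> c) = conv_unit" .
  from conv_inverse_unique[OF lin_B lin_comp[OF lc lin_B] lSB this
      coalg_hom_conv_antipode_left[OF coalg_hom_B]]
  show ?thesis
    unfolding c_def .
qed

lemma hopf_hom_on_B: "hopf_hom_on sc A (desc_op \<Delta> S B1 B2) 1 \<Delta> \<epsilon> \<Delta> \<epsilon> B"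
  using coalg_hom_B B_one B_mult lin_add[OF lin_B] lin_scale[OF lin_B]
  unfolding hopf_hom_on_def coalg_hom_def by auto

lemma hopf_subalgebra_range_B: "hopf_subalgebra sc \<Delta> S (range B)"
  unfolding hopf_subalgebra_def
proof (intro conjI ballI)
  show "V.subspace (range B)"
    using vector_space_pair.linear_subspace_image[OF _ lin_B, of UNIV] V.vector_space_axioms
    by (simp add: vector_space_pair_def)
  show "1 \<in> range B"
    using B_one by (metis rangeI)
  fix a assume "a \<in> range B"
  then obtain u where u: "a = B u" by auto
  show "\<exists>t. set t \<subseteq> range B \<times> range B \<and> tensor_eq sc (\<Delta> a) t"
    using coalg_hom_B u by (intro exI[of _ "map (\<lambda>(x, y). (B x, B y)) (\<Delta> u)"])
      (auto simp: coalg_hom_def)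
  show "S a \<in> range B"
    using u antipode_comp_B by (metis comp_apply rangeI)
  fix b assume "b \<in> range B"
  with u show "a * b \<in> range B"
    using B_mult by auto
qed

end

theorem mainTheorem10:
  fixes sc :: "'k::field_char_0 \<Rightarrow> 'h::ring_1 \<Rightarrow> 'h"
    and \<Delta> :: "'h \<Rightarrow> ('h \<times> 'h) list" and \<epsilon> :: "'h \<Rightarrow> 'k"
    and S B1 B2 :: "'h \<Rightarrow> 'h"
  assumes "rota_baxter_system sc \<Delta> \<epsilon> S B1 B2"
  shows "hopf_hom_on sc (desc_carrier \<Delta> S B1 B2) (desc_op \<Delta> S B1 B2) 1 \<Delta> \<epsilon> \<Delta> \<epsilon> B1
    \<and> hopf_hom_on sc (desc_carrier \<Delta> S B1 B2) (desc_op \<Delta> S B1 B2) 1 \<Delta> \<epsilon> \<Delta> \<epsilon> B2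
    \<and> hopf_subalgebra sc \<Delta> S (range B1)
    \<and> hopf_subalgebra sc \<Delta> S (range B2)"
proof -
  interpret R1: rota_baxter_system_component sc \<Delta> \<epsilon> S B1 B2 B1
    using assms unfolding rota_baxter_system_def
    by unfold_locales (auto simp: desc_op_def)
  interpret R2: rota_baxter_system_component sc \<Delta> \<epsilon> S B1 B2 B2
    using assms unfolding rota_baxter_system_def
    by unfold_locales (auto simp: desc_op_def)
  show ?thesis
    using R1.hopf_hom_on_B R2.hopf_hom_on_B R1.hopf_subalgebra_range_B R2.hopf_subalgebra_range_B
    by blast
qed

end
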